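(* Let $N\equiv 2\pmod 4$, $q=e^{2\pi i/N}$, $\rho=\sum_{j=1}^n(n-j+\tfrac12)\epsilon_j$, and let $W$ be the group of signed permutations of $\epsilon_1,\dots,\epsilon_n$ (the Weyl group of $osp(1|2n)$) and $\epsilon':W\to\{\pm1\}$ any function. Set $c=\big(\sum_{\lambda\in(\mathbb{Z}/N\mathbb{Z})^n}q^{(\lambda,\lambda+2\rho)}\big)^{-1}$ (well defined by nonvanishing of this sum) and $x_\lambda=c\,q^{-(\lambda,2\rho)}$. For $\lambda,\mu\in\mathbb{Z}^n$ define $$S'_{\lambda,\mu}=\sum_{\sigma\in W}\epsilon'(\sigma)\,q^{2(\lambda+\rho,\sigma(\mu+\rho))},\qquad Q_\mu=\sum_{\sigma\in W}\epsilon'(\sigma)\,q^{2(\rho,\sigma(\mu+\rho))}.$$ Then for every $\mu\in\mathbb{Z}^n$, $$\sum_{\lambda\in(\mathbb{Z}/N\mathbb{Z})^n}x_\lambda\,q^{(\lambda,\lambda+2\rho)}\,S'_{\lambda,\mu}=Q_\mu\,q^{-(\mu,\mu+2\rho)},$$ where the summand is independent of the choice of representative of $\lambda$ modulo $N$.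
   Context: $(\cdot,\cdot)$ is the standard inner product with orthonormal basis $\epsilon_1,\dots,\epsilon_n$. $W$ acts on $\mathbb{R}^n$ by permuting coordinates and changing their signs. $\rho$ is the Weyl vector of $osp(1|2n)$: half the sum of the even positive roots $\epsilon_i\pm\epsilon_j$ $(i<j)$, $2\epsilon_k$, minus half the sum of the odd positive roots $\epsilon_k$. *)

theory Defs
  imports Complex_Main "HOL-Combinatorics.Permutations" "HOL-Library.FuncSet"
begin

text \<open>Vectors in R^n are functions nat => real, only coordinates 0..n-1 matter
  (coordinate i corresponds to epsilon_(i+1)).\<close>

definition qpow :: "nat \<Rightarrow> real \<Rightarrow> complex" where
  "qpow N r = exp (2 * of_real pi * \<i> * of_real r / of_nat N)"

definition inner_n :: "nat \<Rightarrow> (nat \<Rightarrow> real) \<Rightarrow> (nat \<Rightarrow> real) \<Rightarrow> real" where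
  "inner_n n a b = (\<Sum>i<n. a i * b i)"

text \<open>rho = sum_(j=1..n) (n - j + 1/2) eps_j; with 0-based index i = j - 1.\<close>
definition rho :: "nat \<Rightarrow> nat \<Rightarrow> real" where
  "rho n i = real n - real i - 1/2"

definition signed_perms :: "nat \<Rightarrow> ((nat \<Rightarrow> nat) \<times> (nat \<Rightarrow> int)) set" where
  "signed_perms n = {(p, s). p permutes {..<n} \<and> s \<in> (\<Pi>\<^sub>E i\<in>{..<n}. {-1, 1})}"

definition wact :: "(nat \<Rightarrow> nat) \<times> (nat \<Rightarrow> int) \<Rightarrow> (nat \<Rightarrow> real) \<Rightarrow> (nat \<Rightarrow> real)" where
  "wact \<sigma> v = (\<lambda>i. of_int (snd \<sigma> i) * v (fst \<sigma> i))"

definition residue_box :: "nat \<Rightarrow> nat \<Rightarrow> (nat \<Rightarrow> int) set" where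
  "residue_box n N = (\<Pi>\<^sub>E i\<in>{..<n}. {0..<int N})"

definition qform :: "nat \<Rightarrow> (nat \<Rightarrow> int) \<Rightarrow> real" where
  "qform n l = inner_n n (\<lambda>i. of_int (l i)) (\<lambda>i. of_int (l i) + 2 * rho n i)"

definition cconst :: "nat \<Rightarrow> nat \<Rightarrow> complex" where
  "cconst n N = inverse (\<Sum>l\<in>residue_box n N. qpow N (qform n l))"

definition xcoef :: "nat \<Rightarrow> nat \<Rightarrow> (nat \<Rightarrow> int) \<Rightarrow> complex" where
  "xcoef n N l = cconst n N * qpow N (- inner_n n (\<lambda>i. of_int (l i)) (\<lambda>i. 2 * rho n i))"

definition Sprime :: "nat \<Rightarrow> nat \<Rightarrow> ((nat \<Rightarrow> nat) \<times> (nat \<Rightarrow> int) \<Rightarrow> int)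
    \<Rightarrow> (nat \<Rightarrow> int) \<Rightarrow> (nat \<Rightarrow> int) \<Rightarrow> complex" where
  "Sprime n N eps l m = (\<Sum>\<sigma>\<in>signed_perms n. of_int (eps \<sigma>) *
      qpow N (2 * inner_n n (\<lambda>i. of_int (l i) + rho n i) (wact \<sigma> (\<lambda>i. of_int (m i) + rho n i))))"

definition Qcoef :: "nat \<Rightarrow> nat \<Rightarrow> ((nat \<Rightarrow> nat) \<times> (nat \<Rightarrow> int) \<Rightarrow> int)
    \<Rightarrow> (nat \<Rightarrow> int) \<Rightarrow> complex" where
  "Qcoef n N eps m = (\<Sum>\<sigma>\<in>signed_perms n. of_int (eps \<sigma>) *
      qpow N (2 * inner_n n (rho n) (wact \<sigma> (\<lambda>i. of_int (m i) + rho n i))))"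

definition summand :: "nat \<Rightarrow> nat \<Rightarrow> ((nat \<Rightarrow> nat) \<times> (nat \<Rightarrow> int) \<Rightarrow> int)
    \<Rightarrow> (nat \<Rightarrow> int) \<Rightarrow> (nat \<Rightarrow> int) \<Rightarrow> complex" where
  "summand n N eps m l = xcoef n N l * qpow N (qform n l) * Sprime n N eps l m"

end

theory Submission
  imports Defs "HOL-Analysis.Complex_Transcendental"
begin

text \<open>Write \<open>\<nu> = \<mu> + \<rho>\<close>; all its coordinates are half-integers, and so are those of
  every \<open>\<sigma> \<nu>\<close>. Completing the square, the summand for \<open>\<lambda>\<close> equals
  \<open>c \<Sum>\<^sub>\<sigma> \<epsilon>'(\<sigma>) q^(2(\<rho>,\<sigma>\<nu>) - |\<nu>|\<^sup>2) q^|\<lambda> + \<sigma>\<nu>|\<^sup>2\<close>.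
  For a half-integral vector \<open>w\<close>, \<open>q^|\<lambda> + w|\<^sup>2\<close> depends only on \<open>\<lambda>\<close> modulo \<open>N\<close>, and its sum
  over \<open>(\<int>/N\<int>)\<^sup>n\<close> factors into \<open>G\<^sup>n\<close> with the Gauss sum \<open>G = \<Sum>\<^sub>k q^(k + 1/2)\<^sup>2\<close>,
  independently of \<open>w\<close>. The same computation with \<open>w = \<rho>\<close> gives \<open>c = q^|\<rho>|\<^sup>2 / G\<^sup>n\<close>, so the
  factors \<open>G\<^sup>n\<close> cancel; this needs \<open>G \<noteq> 0\<close>, which holds because \<open>|G|\<^sup>2 = 2N\<close> for
  \<open>N \<equiv> 2 mod 4\<close>.\<close>

lemma qpow_add: "qpow N (a + b) = qpow N a * qpow N b"
  unfolding qpow_def by (simp add: add_divide_distrib distrib_left exp_add)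

lemma qpow_uminus: "qpow N (- a) = inverse (qpow N a)"
  unfolding qpow_def by (simp add: exp_minus)

lemma qpow_zero [simp]: "qpow N 0 = 1"
  unfolding qpow_def by simp

lemma qpow_sum: "qpow N (\<Sum>i\<in>A. f i) = (\<Prod>i\<in>A. qpow N (f i))"
  unfolding qpow_def
  by (cases "finite A") (simp_all add: sum_distrib_left sum_divide_distrib exp_sum)

lemma cnj_qpow: "cnj (qpow N a) = qpow N (- a)"
  unfolding qpow_def by (subst exp_cnj) simp

lemma qpow_of_int_eq_1_iff:
  assumes "N > 0"
  shows "qpow N (of_int j) = 1 \<longleftrightarrow> int N dvd j"
proof -
  have "qpow N (of_int j) = 1 \<longleftrightarrow> (\<exists>k::int. 2 * pi * of_int j / real N = 2 * of_int k * pi)"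
    unfolding qpow_def exp_eq_1 by simp
  also have "\<dots> \<longleftrightarrow> (\<exists>k::int. real_of_int j = of_int (k * int N))"
    using assms by (simp add: field_simps)
  also have "\<dots> \<longleftrightarrow> (\<exists>k::int. j = int N * k)"
    by (metis mult.commute of_int_eq_iff)
  finally show ?thesis by (simp add: dvd_def)
qed

lemma qpow_eq_if_diff_multiple:
  assumes "N > 0" and "a - b = real N * of_int t"
  shows "qpow N a = qpow N b"
proof -
  have "qpow N (real N * of_int t) = 1"
    using qpow_of_int_eq_1_iff[OF assms(1), of "int N * t"] by simp
  then have "qpow N (b + (a - b)) = qpow N b"
    unfolding qpow_add assms(2) by simp
  then show ?thesis by simp
qed

lemma sum_periodic_shift:
  fixes F :: "int \<Rightarrow> 'a::comm_monoid_add"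
  assumes "N > 0" and periodic: "\<And>x t. F (x + int N * t) = F x"
  shows "(\<Sum>k\<in>{0..<int N}. F (k + a)) = (\<Sum>k\<in>{0..<int N}. F k)"
proof (rule sum.reindex_bij_witness[where i = "\<lambda>k. (k - a) mod int N" and j = "\<lambda>k. (k + a) mod int N"])
  fix k assume "k \<in> {0..<int N}"
  then show "((k + a) mod int N - a) mod int N = k" by (simp add: mod_diff_left_eq)
  have "F ((k + a) mod int N) = F ((k + a) mod int N + int N * ((k + a) div int N))"
    by (rule periodic[symmetric])
  then show "F ((k + a) mod int N) = F (k + a)" by simp
next
  fix k assume "k \<in> {0..<int N}"
  then show "((k - a) mod int N + a) mod int N = k" by (simp add: mod_add_left_eq)
qed (use assms in auto)

lemma sum_qpow_of_int_mult:
  assumes "N > 0"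
  shows "(\<Sum>k\<in>{0..<int N}. qpow N (of_int (j * k))) = (if int N dvd j then of_nat N else 0)"
proof (cases "int N dvd j")
  case True
  then have "qpow N (of_int (j * k)) = 1" for k
    by (metis dvd_mult2 qpow_of_int_eq_1_iff[OF assms])
  then show ?thesis using True by simp
next
  case False
  let ?T = "\<Sum>k\<in>{0..<int N}. qpow N (of_int (j * k))"
  have "?T * qpow N (of_int j) = (\<Sum>k\<in>{0..<int N}. qpow N (of_int (j * (k + 1))))"
    unfolding sum_distrib_right qpow_add[symmetric] by (simp add: algebra_simps)
  also have "\<dots> = ?T"
  proof (rule sum_periodic_shift[OF assms, of "\<lambda>k. qpow N (of_int (j * k))" 1])
    fix x t :: int
    show "qpow N (of_int (j * (x + int N * t))) = qpow N (of_int (j * x))"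
      by (rule qpow_eq_if_diff_multiple[OF assms, of _ _ "j * t"]) (simp add: algebra_simps)
  qed
  finally have "?T * (qpow N (of_int j) - 1) = 0" by (simp add: algebra_simps)
  moreover have "qpow N (of_int j) \<noteq> 1"
    using False qpow_of_int_eq_1_iff[OF assms] by simp
  ultimately show ?thesis using False by simp
qed

definition gauss_sum :: "nat \<Rightarrow> complex" where
  "gauss_sum N = (\<Sum>k\<in>{0..<int N}. qpow N ((of_int k + 1/2)^2))"

lemma half_integer_cases:
  assumes "w - 1/2 \<in> \<int>"
  obtains a :: int where "w = of_int a + 1/2"
  using assms by (metis Ints_cases diff_eq_eq add.commute)

lemma qpow_half_square_add_multiple:
  assumes "N > 0" and "w - 1/2 \<in> \<int>"
  shows "qpow N ((of_int (k + int N * t) + w)^2) = qpow N ((of_int k + w)^2)"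
proof -
  obtain a :: int where w: "w = of_int a + 1/2"
    using assms(2) by (rule half_integer_cases)
  show ?thesis
    by (rule qpow_eq_if_diff_multiple[OF assms(1), of _ _ "t * (2 * k + int N * t + 2 * a + 1)"])
      (simp add: w power2_eq_square algebra_simps)
qed

lemma gauss_sum_shift:
  assumes "N > 0" and "w - 1/2 \<in> \<int>"
  shows "(\<Sum>k\<in>{0..<int N}. qpow N ((of_int k + w)^2)) = gauss_sum N"
proof -
  obtain a :: int where w: "w = of_int a + 1/2"
    using assms(2) by (rule half_integer_cases)
  have "(\<Sum>k\<in>{0..<int N}. qpow N ((of_int k + w)^2))
      = (\<Sum>k\<in>{0..<int N}. qpow N ((of_int (k + a) + 1/2)^2))"
    by (simp add: w add.assoc)
  also have "\<dots> = gauss_sum N"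
    unfolding gauss_sum_def
    by (rule sum_periodic_shift[OF assms(1), of "\<lambda>k. qpow N ((of_int k + 1/2)^2)"],
        rule qpow_half_square_add_multiple[OF assms(1)]) simp
  finally show ?thesis .
qed

lemma gauss_sum_times_cnj_eq:
  assumes N: "N > 0"
  shows "gauss_sum N * cnj (gauss_sum N)
           = (\<Sum>d\<in>{0..<int N}. qpow N (of_int (d^2 + d)) * (if int N dvd 2 * d then of_nat N else 0))"
proof -
  let ?f = "\<lambda>j::int. (of_int j + 1/2 :: real)^2"
  have "gauss_sum N * cnj (gauss_sum N) = (\<Sum>k\<in>{0..<int N}. \<Sum>j\<in>{0..<int N}. qpow N (?f j - ?f k))"
    unfolding gauss_sum_def cnj_sum cnj_qpow sum_product qpow_add[symmetric]
    by (subst sum.swap) simp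
  also have "\<dots> = (\<Sum>k\<in>{0..<int N}. \<Sum>d\<in>{0..<int N}.
                      qpow N (of_int (d^2 + d)) * qpow N (of_int (2 * d * k)))"
  proof (rule sum.cong[OF refl])
    fix k
    have "(\<Sum>j\<in>{0..<int N}. qpow N (?f j - ?f k)) = (\<Sum>d\<in>{0..<int N}. qpow N (?f (d + k) - ?f k))"
    proof (rule sum_periodic_shift[OF N, of "\<lambda>j. qpow N (?f j - ?f k)", symmetric])
      fix x t :: int
      show "qpow N (?f (x + int N * t) - ?f k) = qpow N (?f x - ?f k)"
        by (rule qpow_eq_if_diff_multiple[OF N, of _ _ "t * (2 * x + int N * t + 1)"])
          (simp add: power2_eq_square algebra_simps)
    qed
    also have "\<dots> = (\<Sum>d\<in>{0..<int N}. qpow N (of_int (d^2 + d)) * qpow N (of_int (2 * d * k)))"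
      by (simp add: qpow_add[symmetric] power2_eq_square algebra_simps)
    finally show "(\<Sum>j\<in>{0..<int N}. qpow N (?f j - ?f k)) = \<dots>" .
  qed
  also have "\<dots> = (\<Sum>d\<in>{0..<int N}. qpow N (of_int (d^2 + d)) * (if int N dvd 2 * d then of_nat N else 0))"
    by (subst sum.swap) (simp only: sum_distrib_left[symmetric] sum_qpow_of_int_mult[OF N])
  finally show ?thesis .
qed

text \<open>Only \<open>d = 0\<close> and \<open>d = N/2\<close> survive, and \<open>d = N/2\<close> contributes \<open>q^(d\<^sup>2 + d) = 1\<close>
  because \<open>N/2\<close> is odd (for \<open>4 dvd N\<close> it would contribute \<open>-1\<close> and \<open>G\<close> would vanish).\<close>

lemma gauss_sum_times_cnj:
  assumes "N mod 4 = 2"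
  shows "gauss_sum N * cnj (gauss_sum N) = 2 * of_nat N"
proof -
  have N: "N > 0" using assms by (cases N) auto
  define M where "M = int N div 2"
  have M: "int N = 2 * M" "odd M" using assms unfolding M_def by presburger+
  have "gauss_sum N * cnj (gauss_sum N)
          = (\<Sum>d\<in>{d\<in>{0..<int N}. int N dvd 2 * d}. qpow N (of_int (d^2 + d)) * of_nat N)"
    unfolding gauss_sum_times_cnj_eq[OF N] sum.inter_filter[OF finite_atLeastLessThan_int]
    by (intro sum.cong) auto
  also have "{d\<in>{0..<int N}. int N dvd 2 * d} = {0, M}"
  proof (intro equalityI subsetI)
    fix d assume d: "d \<in> {d\<in>{0..<int N}. int N dvd 2 * d}"
    then obtain c where "2 * d = int N * c" by blast
    then have c: "d = M * c" using M by simp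
    have "0 \<le> M * c" "M * c < M * 2" "M > 0" using d c M N by auto
    then have "0 \<le> c" "c < 2" by (simp_all add: zero_le_mult_iff)
    then show "d \<in> {0, M}" using c by auto
  qed (use M N in auto)
  also have "(\<Sum>d\<in>{0, M}. qpow N (of_int (d^2 + d)) * of_nat N) = 2 * of_nat N"
  proof -
    obtain u where "M = 2 * u + 1" using \<open>odd M\<close> by (rule oddE)
    then have "M^2 + M = int N * (u + 1)" using M by (simp add: power2_eq_square algebra_simps)
    then have "qpow N (of_int (M^2 + M)) = 1" unfolding qpow_of_int_eq_1_iff[OF N] by simp
    then show ?thesis using M N by simp
  qed
  finally show ?thesis .
qed

lemma gauss_sum_nonzero: "N mod 4 = 2 \<Longrightarrow> gauss_sum N \<noteq> 0"
  using gauss_sum_times_cnj by fastforce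

definition half_integral :: "nat \<Rightarrow> (nat \<Rightarrow> real) \<Rightarrow> bool" where
  "half_integral n w \<longleftrightarrow> (\<forall>i<n. w i - 1/2 \<in> \<int>)"

definition plus_rho :: "nat \<Rightarrow> (nat \<Rightarrow> int) \<Rightarrow> nat \<Rightarrow> real" where
  "plus_rho n l = (\<lambda>i. of_int (l i) + rho n i)"

lemma half_integral_plus_rho: "half_integral n (plus_rho n l)"
proof -
  have "plus_rho n l i - 1/2 = of_int (l i + int n - int i - 1)" for i
    unfolding plus_rho_def rho_def by simp
  then show ?thesis unfolding half_integral_def by (metis Ints_of_int)
qed

lemma signed_permsD:
  assumes "\<sigma> \<in> signed_perms n"
  shows "fst \<sigma> permutes {..<n}" and "i < n \<Longrightarrow> snd \<sigma> i = 1 \<or> snd \<sigma> i = -1"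
  using assms unfolding signed_perms_def by (auto simp: PiE_iff)

lemma half_integral_wact:
  assumes "\<sigma> \<in> signed_perms n" and "half_integral n v"
  shows "half_integral n (wact \<sigma> v)"
  unfolding half_integral_def
proof (intro allI impI)
  fix i assume "i < n"
  then have "v (fst \<sigma> i) - 1/2 \<in> \<int>"
    using assms permutes_in_image[OF signed_permsD(1)[OF assms(1)]]
    unfolding half_integral_def by simp
  from signed_permsD(2)[OF assms(1) \<open>i < n\<close>] show "wact \<sigma> v i - 1/2 \<in> \<int>"
  proof
    assume "snd \<sigma> i = 1"
    then show ?thesis using \<open>v (fst \<sigma> i) - 1/2 \<in> \<int>\<close> unfolding wact_def by simp
  next
    assume "snd \<sigma> i = -1"
    then have "wact \<sigma> v i - 1/2 = - (v (fst \<sigma> i) - 1/2) - 1" unfolding wact_def by simp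
    then show ?thesis using \<open>v (fst \<sigma> i) - 1/2 \<in> \<int>\<close> by (metis Ints_1 Ints_diff Ints_minus)
  qed
qed

lemma sum_squares_wact:
  assumes "\<sigma> \<in> signed_perms n"
  shows "(\<Sum>i<n. (wact \<sigma> v i)^2) = (\<Sum>i<n. (v i)^2)"
proof -
  have "(\<Sum>i<n. (wact \<sigma> v i)^2) = (\<Sum>i<n. (v (fst \<sigma> i))^2)"
  proof (rule sum.cong[OF refl])
    fix i assume "i \<in> {..<n}"
    then have "(of_int (snd \<sigma> i))^2 = (1::real)" using signed_permsD(2)[OF assms] by fastforce
    then show "(wact \<sigma> v i)^2 = (v (fst \<sigma> i))^2" unfolding wact_def by (simp add: power_mult_distrib)
  qed
  also have "\<dots> = (\<Sum>i<n. (v i)^2)"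
    using sum.permute[OF signed_permsD(1)[OF assms], of "\<lambda>i. (v i)^2"] by (simp add: comp_def)
  finally show ?thesis .
qed

lemma qform_eq: "qform n l = (\<Sum>i<n. (plus_rho n l i)^2) - (\<Sum>i<n. (rho n i)^2)"
  unfolding qform_def inner_n_def plus_rho_def sum_subtractf[symmetric]
  by (intro sum.cong) (simp_all add: power2_eq_square algebra_simps)

lemma summand_exponent_eq:
  "- inner_n n a (\<lambda>i. 2 * r i) + inner_n n a (\<lambda>i. a i + 2 * r i) + 2 * inner_n n (\<lambda>i. a i + r i) w
     = (\<Sum>i<n. (a i + w i)^2) - (\<Sum>i<n. (w i)^2) + 2 * inner_n n r w"
  unfolding inner_n_def sum_distrib_left sum_negf[symmetric] sum_subtractf[symmetric]
    sum.distrib[symmetric]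
  by (intro sum.cong) (simp_all add: power2_eq_square algebra_simps)

lemma sum_residue_box_qpow_squares:
  assumes "N > 0" and "half_integral n w"
  shows "(\<Sum>l\<in>residue_box n N. qpow N (\<Sum>i<n. (of_int (l i) + w i)^2)) = gauss_sum N ^ n"
proof -
  have "(\<Sum>l\<in>residue_box n N. qpow N (\<Sum>i<n. (of_int (l i) + w i)^2))
      = (\<Prod>i<n. \<Sum>k\<in>{0..<int N}. qpow N ((of_int k + w i)^2))"
    unfolding qpow_sum residue_box_def by (rule prod_sum_PiE[symmetric]) auto
  also have "\<dots> = (\<Prod>i<n. gauss_sum N)"
    using assms gauss_sum_shift unfolding half_integral_def by (intro prod.cong) auto
  finally show ?thesis by simp
qed

lemma qpow_sum_squares_cong:
  assumes "N > 0" and "half_integral n w" and "\<forall>i<n. l i mod int N = l' i mod int N"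
  shows "qpow N (\<Sum>i<n. (of_int (l i) + w i)^2) = qpow N (\<Sum>i<n. (of_int (l' i) + w i)^2)"
  unfolding qpow_sum
proof (rule prod.cong[OF refl])
  fix i assume "i \<in> {..<n}"
  then have "l i = l' i + int N * ((l i - l' i) div int N)" "w i - 1/2 \<in> \<int>"
    using assms(2,3) unfolding half_integral_def by (auto simp: mod_eq_dvd_iff)
  then show "qpow N ((of_int (l i) + w i)^2) = qpow N ((of_int (l' i) + w i)^2)"
    by (metis qpow_half_square_add_multiple[OF assms(1)])
qed

lemma cconst_eq:
  assumes "N > 0"
  shows "cconst n N = qpow N (\<Sum>i<n. (rho n i)^2) / gauss_sum N ^ n"
proof -
  have "half_integral n (rho n)"
    using half_integral_plus_rho[of n "\<lambda>_. 0"] by (simp add: plus_rho_def)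
  then have "(\<Sum>l\<in>residue_box n N. qpow N (qform n l))
      = qpow N (- (\<Sum>i<n. (rho n i)^2)) * gauss_sum N ^ n"
    unfolding qform_eq diff_conv_add_uminus qpow_add sum_distrib_right[symmetric]
    by (simp add: plus_rho_def sum_residue_box_qpow_squares[OF assms] mult.commute)
  then show ?thesis
    unfolding cconst_def qpow_uminus by (simp add: divide_inverse)
qed

lemma summand_eq:
  "summand n N eps m l = cconst n N * (\<Sum>\<sigma>\<in>signed_perms n. of_int (eps \<sigma>)
     * qpow N (2 * inner_n n (rho n) (wact \<sigma> (plus_rho n m)) - (\<Sum>i<n. (plus_rho n m i)^2))
     * qpow N (\<Sum>i<n. (of_int (l i) + wact \<sigma> (plus_rho n m) i)^2))"
  unfolding summand_def xcoef_def Sprime_def sum_distrib_left plus_rho_def[of n m, symmetric]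
proof (rule sum.cong[OF refl])
  fix \<sigma> assume "\<sigma> \<in> signed_perms n"
  let ?w = "wact \<sigma> (plus_rho n m)"
  let ?a = "- inner_n n (\<lambda>i. of_int (l i)) (\<lambda>i. 2 * rho n i)"
  let ?b = "2 * inner_n n (\<lambda>i. of_int (l i) + rho n i) ?w"
  let ?x = "2 * inner_n n (rho n) ?w - (\<Sum>i<n. (plus_rho n m i)^2)"
  let ?y = "\<Sum>i<n. (of_int (l i) + ?w i)^2"
  have "?a + qform n l + ?b = ?x + ?y"
    using summand_exponent_eq[of n "\<lambda>i. of_int (l i)" "rho n" ?w]
      sum_squares_wact[OF \<open>\<sigma> \<in> signed_perms n\<close>, of "plus_rho n m"]
    unfolding qform_def by simp
  then have "qpow N ?a * qpow N (qform n l) * qpow N ?b = qpow N ?x * qpow N ?y"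
    by (metis qpow_add)
  then show "cconst n N * qpow N ?a * qpow N (qform n l) * (of_int (eps \<sigma>) * qpow N ?b)
    = cconst n N * (of_int (eps \<sigma>) * qpow N ?x * qpow N ?y)"
    by (simp add: algebra_simps)
qed

lemma summand_cong:
  assumes "N > 0" and "\<forall>i<n. l i mod int N = l' i mod int N"
  shows "summand n N eps m l = summand n N eps m l'"
  unfolding summand_eq
  using qpow_sum_squares_cong[OF assms(1) half_integral_wact[OF _ half_integral_plus_rho] assms(2)]
  by simp

lemma sum_summand_eq:
  assumes "N > 0" and "gauss_sum N \<noteq> 0"
  shows "(\<Sum>l\<in>residue_box n N. summand n N eps m l) = Qcoef n N eps m * qpow N (- qform n m)"
proof -
  let ?w = "\<lambda>\<sigma>. wact \<sigma> (plus_rho n m)"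
  let ?E = "\<lambda>\<sigma>. of_int (eps \<sigma>) * qpow N (2 * inner_n n (rho n) (?w \<sigma>) - (\<Sum>i<n. (plus_rho n m i)^2))"
  let ?R = "\<Sum>i<n. (rho n i)^2"
  have "(\<Sum>l\<in>residue_box n N. summand n N eps m l) = cconst n N * (\<Sum>\<sigma>\<in>signed_perms n.
          ?E \<sigma> * (\<Sum>l\<in>residue_box n N. qpow N (\<Sum>i<n. (of_int (l i) + ?w \<sigma> i)^2)))"
    unfolding summand_eq sum_distrib_left[symmetric]
    by (subst sum.swap) (simp add: sum_distrib_left)
  also have "\<dots> = cconst n N * (\<Sum>\<sigma>\<in>signed_perms n. ?E \<sigma> * gauss_sum N ^ n)"
    using sum_residue_box_qpow_squares[OF assms(1) half_integral_wact[OF _ half_integral_plus_rho]]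
    by simp
  also have "\<dots> = (\<Sum>\<sigma>\<in>signed_perms n. qpow N ?R * ?E \<sigma>)"
    using assms(2) unfolding cconst_eq[OF assms(1)] sum_distrib_left by (simp add: field_simps)
  also have "\<dots> = Qcoef n N eps m * qpow N (- qform n m)"
    unfolding Qcoef_def qform_eq plus_rho_def[of n m, symmetric] sum_distrib_right
    by (intro sum.cong) (simp_all add: qpow_add[symmetric] algebra_simps)
  finally show ?thesis .
qed

theorem mainTheorem7:
  fixes n N :: nat and eps :: "(nat \<Rightarrow> nat) \<times> (nat \<Rightarrow> int) \<Rightarrow> int"
    and m :: "nat \<Rightarrow> int"
  assumes "N mod 4 = 2"
    and "\<forall>\<sigma>\<in>signed_perms n. eps \<sigma> \<in> {-1, 1}"
  shows "(\<forall>l l' :: nat \<Rightarrow> int. (\<forall>i<n. l i mod int N = l' i mod int N)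
            \<longrightarrow> summand n N eps m l = summand n N eps m l')
       \<and> (\<Sum>l\<in>residue_box n N. summand n N eps m l)
           = Qcoef n N eps m * qpow N (- qform n m)"
proof
  have N: "N > 0" using assms(1) by (cases N) auto
  show "\<forall>l l'. (\<forall>i<n. l i mod int N = l' i mod int N) \<longrightarrow> summand n N eps m l = summand n N eps m l'"
    using summand_cong[OF N] by blast
  show "(\<Sum>l\<in>residue_box n N. summand n N eps m l) = Qcoef n N eps m * qpow N (- qform n m)"
    using sum_summand_eq[OF N gauss_sum_nonzero[OF assms(1)]] .
qed

end
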